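(* Let the setting be as in the context. Let $A\in\mathcal L(\mathcal H)$ with $A\ge0$ be such that $A\ast B\in L^1(\Xi)$ for every $B\in\mathcal T^1(\mathcal H)$ with $B\ge0$. Then $A\in\mathcal T^1(\mathcal H)$.
   Context: $\Xi$ is a locally compact abelian group; $m:\Xi\times\Xi\to S^1$ separately continuous with $m(x+y,z)m(x,y)=m(x,y+z)m(y,z)$, $m(x,0)=m(0,x)=1$, $m(x,y)=m(-x,-y)$, Heisenberg ($x\mapsto\sigma(x,\cdot)$ with $\sigma(x,y)=m(x,y)/m(y,x)$ a topological isomorphism $\Xi\to\widehat\Xi$). $(U_x)$ is the irreducible strongly continuous square integrable projective unitary representation on $\mathcal H$ with $U_xU_y=m(x,y)U_{x+y}$; Haar measure normalized so that $\int_\Xi\langle U_x\varphi_1,\psi_1\rangle\overline{\langle U_x\varphi_2,\psi_2\rangle}dx=\langle\varphi_1,\varphi_2\rangle\overline{\langle\psi_1,\psi_2\rangle}$. $R$ is a self-adjoint unitary with $U_xR=RU_{-x}$. $\alpha_x(A)=U_xAU_x^*$, $\beta_-(A)=RAR$, and for $B\in\mathcal T^1(\mathcal H)$, $A\in\mathcal L(\mathcal H)$: $A\ast B(x)=B\ast A(x)=\operatorname{tr}(B\,\alpha_x(\beta_-(A)))$. *)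

theory Defs
  imports "HOL-Analysis.Analysis"
begin

text \<open>Complex Hilbert space on a type 'h, given by a scalar multiplication smul and an
  inner product ip (linear in the first argument, conjugate-linear in the second).\<close>

definition hnorm :: "('h \<Rightarrow> 'h \<Rightarrow> complex) \<Rightarrow> 'h \<Rightarrow> real" where
  "hnorm ip x = sqrt (Re (ip x x))"

definition hilbert_space :: "(complex \<Rightarrow> 'h::ab_group_add \<Rightarrow> 'h) \<Rightarrow> ('h \<Rightarrow> 'h \<Rightarrow> complex) \<Rightarrow> bool" where
  "hilbert_space smul ip \<longleftrightarrow>
     (\<forall>x. smul 1 x = x) \<and>
     (\<forall>a b x. smul a (smul b x) = smul (a * b) x) \<and>
     (\<forall>a b x. smul (a + b) x = smul a x + smul b x) \<and>
     (\<forall>a x y. smul a (x + y) = smul a x + smul a y) \<and>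
     (\<forall>x y z. ip (x + y) z = ip x z + ip y z) \<and>
     (\<forall>a x y. ip (smul a x) y = a * ip x y) \<and>
     (\<forall>x y. ip y x = cnj (ip x y)) \<and>
     (\<forall>x. Im (ip x x) = 0 \<and> Re (ip x x) \<ge> 0) \<and>
     (\<forall>x. ip x x = 0 \<longrightarrow> x = 0) \<and>
     (\<forall>s::nat \<Rightarrow> 'h. (\<forall>e>0. \<exists>N. \<forall>m\<ge>N. \<forall>n\<ge>N. hnorm ip (s m - s n) < e)
        \<longrightarrow> (\<exists>l. (\<lambda>n. hnorm ip (s n - l)) \<longlonglongrightarrow> 0))"

definition bounded_op :: "(complex \<Rightarrow> 'h::ab_group_add \<Rightarrow> 'h) \<Rightarrow> ('h \<Rightarrow> 'h \<Rightarrow> complex) \<Rightarrow> ('h \<Rightarrow> 'h) \<Rightarrow> bool" where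
  "bounded_op smul ip T \<longleftrightarrow>
     (\<forall>x y. T (x + y) = T x + T y) \<and> (\<forall>a x. T (smul a x) = smul a (T x)) \<and>
     (\<exists>C. \<forall>x. hnorm ip (T x) \<le> C * hnorm ip x)"

definition adj :: "('h \<Rightarrow> 'h \<Rightarrow> complex) \<Rightarrow> ('h \<Rightarrow> 'h) \<Rightarrow> ('h \<Rightarrow> 'h)" where
  "adj ip T = (SOME S. \<forall>x y. ip (T x) y = ip x (S y))"

definition unitary_op :: "(complex \<Rightarrow> 'h::ab_group_add \<Rightarrow> 'h) \<Rightarrow> ('h \<Rightarrow> 'h \<Rightarrow> complex) \<Rightarrow> ('h \<Rightarrow> 'h) \<Rightarrow> bool" where
  "unitary_op smul ip T \<longleftrightarrow> bounded_op smul ip T \<and> surj T \<and> (\<forall>x y. ip (T x) (T y) = ip x y)"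

definition selfadjoint_op :: "(complex \<Rightarrow> 'h::ab_group_add \<Rightarrow> 'h) \<Rightarrow> ('h \<Rightarrow> 'h \<Rightarrow> complex) \<Rightarrow> ('h \<Rightarrow> 'h) \<Rightarrow> bool" where
  "selfadjoint_op smul ip T \<longleftrightarrow> bounded_op smul ip T \<and> (\<forall>x y. ip (T x) y = ip x (T y))"

definition positive_op :: "(complex \<Rightarrow> 'h::ab_group_add \<Rightarrow> 'h) \<Rightarrow> ('h \<Rightarrow> 'h \<Rightarrow> complex) \<Rightarrow> ('h \<Rightarrow> 'h) \<Rightarrow> bool" where
  "positive_op smul ip T \<longleftrightarrow> bounded_op smul ip T \<and> (\<forall>x. Im (ip (T x) x) = 0 \<and> Re (ip (T x) x) \<ge> 0)"

definition abs_op :: "(complex \<Rightarrow> 'h::ab_group_add \<Rightarrow> 'h) \<Rightarrow> ('h \<Rightarrow> 'h \<Rightarrow> complex) \<Rightarrow> ('h \<Rightarrow> 'h) \<Rightarrow> ('h \<Rightarrow> 'h)" where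
  "abs_op smul ip T = (THE P. positive_op smul ip P \<and> P \<circ> P = adj ip T \<circ> T)"

definition onb :: "('h::ab_group_add \<Rightarrow> 'h \<Rightarrow> complex) \<Rightarrow> 'h set \<Rightarrow> bool" where
  "onb ip E \<longleftrightarrow> (\<forall>e\<in>E. ip e e = 1) \<and> (\<forall>e\<in>E. \<forall>f\<in>E. e \<noteq> f \<longrightarrow> ip e f = 0) \<and>
     (\<forall>x. (\<forall>e\<in>E. ip x e = 0) \<longrightarrow> x = 0)"

definition trace_class :: "(complex \<Rightarrow> 'h::ab_group_add \<Rightarrow> 'h) \<Rightarrow> ('h \<Rightarrow> 'h \<Rightarrow> complex) \<Rightarrow> ('h \<Rightarrow> 'h) \<Rightarrow> bool" where
  "trace_class smul ip T \<longleftrightarrow> bounded_op smul ip T \<and>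
     (\<exists>E. onb ip E \<and> (\<lambda>e. Re (ip (abs_op smul ip T e) e)) summable_on E)"

definition trace :: "('h::ab_group_add \<Rightarrow> 'h \<Rightarrow> complex) \<Rightarrow> ('h \<Rightarrow> 'h) \<Rightarrow> complex" where
  "trace ip T = (let E = (SOME E. onb ip E) in infsum (\<lambda>e. ip (T e) e) E)"

definition sympl :: "('x \<Rightarrow> 'x \<Rightarrow> complex) \<Rightarrow> 'x \<Rightarrow> 'x \<Rightarrow> complex" where
  "sympl m x y = m x y / m y x"

definition character :: "('x::topological_ab_group_add \<Rightarrow> complex) \<Rightarrow> bool" where
  "character ch \<longleftrightarrow> continuous_on UNIV ch \<and> (\<forall>x. norm (ch x) = 1) \<and>
     (\<forall>x y. ch (x + y) = ch x * ch y)"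

definition multiplier :: "('x::topological_ab_group_add \<Rightarrow> 'x \<Rightarrow> complex) \<Rightarrow> bool" where
  "multiplier m \<longleftrightarrow> (\<forall>x y. norm (m x y) = 1) \<and>
     (\<forall>x. continuous_on UNIV (m x)) \<and> (\<forall>y. continuous_on UNIV (\<lambda>x. m x y)) \<and>
     (\<forall>x y z. m (x + y) z * m x y = m x (y + z) * m y z) \<and>
     (\<forall>x. m x 0 = 1 \<and> m 0 x = 1) \<and> (\<forall>x y. m x y = m (-x) (-y))"

text \<open>Heisenberg: x \<mapsto> sigma(x,.) is a topological isomorphism onto the dual group
  (with its compact-open topology).\<close>
definition heisenberg :: "('x::topological_ab_group_add \<Rightarrow> 'x \<Rightarrow> complex) \<Rightarrow> bool" where
  "heisenberg m \<longleftrightarrow>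
     (\<forall>x. character (sympl m x)) \<and>
     (\<forall>x y. sympl m (x + y) = (\<lambda>z. sympl m x z * sympl m y z)) \<and>
     (\<forall>ch. character ch \<longrightarrow> (\<exists>!x. sympl m x = ch)) \<and>
     (\<forall>x0 K e. compact K \<and> e > 0 \<longrightarrow>
        (\<forall>\<^sub>F x in nhds x0. \<forall>y\<in>K. norm (sympl m x y - sympl m x0 y) < e)) \<and>
     (\<forall>x0 V. open V \<and> x0 \<in> V \<longrightarrow> (\<exists>K e. compact K \<and> e > 0 \<and>
        (\<forall>x. (\<forall>y\<in>K. norm (sympl m x y - sympl m x0 y) < e) \<longrightarrow> x \<in> V)))"

definition haar_measure :: "'x::topological_ab_group_add measure \<Rightarrow> bool" where
  "haar_measure M \<longleftrightarrow> sets M = sets borel \<and>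
     (\<forall>a. \<forall>S\<in>sets M. emeasure M ((\<lambda>x. a + x) ` S) = emeasure M S) \<and>
     (\<forall>K. compact K \<longrightarrow> emeasure M K < \<infinity>) \<and>
     (\<forall>V. open V \<and> V \<noteq> {} \<longrightarrow> emeasure M V > 0) \<and>
     (\<forall>S\<in>sets M. emeasure M S = (INF V\<in>{V. open V \<and> S \<subseteq> V}. emeasure M V)) \<and>
     (\<forall>V. open V \<longrightarrow> emeasure M V = (SUP K\<in>{K. compact K \<and> K \<subseteq> V}. emeasure M K))"

definition closed_subspace :: "(complex \<Rightarrow> 'h::ab_group_add \<Rightarrow> 'h) \<Rightarrow> ('h \<Rightarrow> 'h \<Rightarrow> complex) \<Rightarrow> 'h set \<Rightarrow> bool" where
  "closed_subspace smul ip S \<longleftrightarrow> 0 \<in> S \<and> (\<forall>x\<in>S. \<forall>y\<in>S. x + y \<in> S) \<and> (\<forall>a. \<forall>x\<in>S. smul a x \<in> S) \<and>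
     (\<forall>s l. (\<forall>n. s n \<in> S) \<and> (\<lambda>n. hnorm ip (s n - l)) \<longlonglongrightarrow> 0 \<longrightarrow> l \<in> S)"

definition heis_setting ::
  "(complex \<Rightarrow> 'h::ab_group_add \<Rightarrow> 'h) \<Rightarrow> ('h \<Rightarrow> 'h \<Rightarrow> complex) \<Rightarrow>
   ('x::{topological_ab_group_add,t2_space} \<Rightarrow> 'x \<Rightarrow> complex) \<Rightarrow> ('x \<Rightarrow> 'h \<Rightarrow> 'h) \<Rightarrow> ('h \<Rightarrow> 'h) \<Rightarrow>
   'x measure \<Rightarrow> bool" where
  "heis_setting smul ip m U R M \<longleftrightarrow>
     hilbert_space smul ip \<and>
     locally_compact_space (euclidean :: 'x topology) \<and>
     multiplier m \<and> heisenberg m \<and>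
     (\<forall>x. unitary_op smul ip (U x)) \<and>
     (\<forall>x y. U x \<circ> U y = (\<lambda>v. smul (m x y) (U (x + y) v))) \<and>
     (\<forall>x0 v e. e > 0 \<longrightarrow> (\<forall>\<^sub>F x in nhds x0. hnorm ip (U x v - U x0 v) < e)) \<and>
     (\<forall>S. closed_subspace smul ip S \<and> (\<forall>x. U x ` S \<subseteq> S) \<longrightarrow> S = {0} \<or> S = UNIV) \<and>
     haar_measure M \<and>
     (\<forall>\<phi>1 \<psi>1 \<phi>2 \<psi>2.
        integrable M (\<lambda>x. ip (U x \<phi>1) \<psi>1 * cnj (ip (U x \<phi>2) \<psi>2)) \<and>
        (\<integral>x. ip (U x \<phi>1) \<psi>1 * cnj (ip (U x \<phi>2) \<psi>2) \<partial>M) = ip \<phi>1 \<phi>2 * cnj (ip \<psi>1 \<psi>2)) \<and>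
     unitary_op smul ip R \<and> selfadjoint_op smul ip R \<and>
     (\<forall>x. U x \<circ> R = R \<circ> U (-x))"

text \<open>Operator convolution A * B (x) = tr (B alpha_x (beta_- A)).\<close>
definition op_conv ::
  "('h::ab_group_add \<Rightarrow> 'h \<Rightarrow> complex) \<Rightarrow> ('x \<Rightarrow> 'h \<Rightarrow> 'h) \<Rightarrow> ('h \<Rightarrow> 'h) \<Rightarrow> ('h \<Rightarrow> 'h) \<Rightarrow> ('h \<Rightarrow> 'h) \<Rightarrow> 'x \<Rightarrow> complex" where
  "op_conv ip U R A B x = trace ip (B \<circ> (U x \<circ> (R \<circ> A \<circ> R) \<circ> adj ip (U x)))"

end

theory Submission
  imports Defs
begin

text \<open>Fix an orthonormal basis \<open>E\<close>, a vector \<open>\<phi> \<in> E\<close> and the projection \<open>B\<close> onto \<open>\<phi>\<close>.  Then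
  \<open>(A \<ast> B)(x) = \<langle>A w\<^sub>x, w\<^sub>x\<rangle>\<close> with \<open>w\<^sub>x = R U\<^sub>x\<^sup>* \<phi>\<close>, and the orthogonality relations say that these
  vectors resolve the identity: \<open>\<integral> \<langle>u, w\<^sub>x\<rangle> \<langle>w\<^sub>x, v\<rangle> dx = \<langle>u, v\<rangle>\<close>.  For finite \<open>F \<subseteq> E\<close>, integrating
  \<open>\<langle>A (w\<^sub>x - p\<^sub>x), w\<^sub>x - p\<^sub>x\<rangle> \<ge> 0\<close>, where \<open>p\<^sub>x\<close> is the projection of \<open>w\<^sub>x\<close> onto the span of \<open>F\<close>, leaves
  \<open>(\<Sum>e\<in>F. \<langle>A e, e\<rangle>) \<le> \<integral> A \<ast> B\<close>.  So the diagonal of \<open>A\<close> is summable along \<open>E\<close>, and \<open>A\<close> is trace class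
  because \<open>|A| = A\<close>; the uniqueness of positive square roots behind the last equation follows from
  an elementary trace argument once the diagonal is summable.\<close>

section \<open>Inner products and Cauchy--Schwarz\<close>

locale hilbert =
  fixes smul :: "complex \<Rightarrow> 'h::ab_group_add \<Rightarrow> 'h" and ip :: "'h \<Rightarrow> 'h \<Rightarrow> complex"
  assumes hilbert: "hilbert_space smul ip"
begin

lemma smul_smul [simp]: "smul a (smul b x) = smul (a * b) x"
  using hilbert unfolding hilbert_space_def by metis

lemma smul_add_left: "smul (a + b) x = smul a x + smul b x"
  using hilbert unfolding hilbert_space_def by metis

lemma ip_add_left: "ip (x + y) z = ip x z + ip y z"
  using hilbert unfolding hilbert_space_def by metis

lemma ip_smul_left [simp]: "ip (smul a x) y = a * ip x y"
  using hilbert unfolding hilbert_space_def by metis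

lemma ip_conj_sym: "ip y x = cnj (ip x y)"
  using hilbert unfolding hilbert_space_def by metis

lemma ip_self_Im [simp]: "Im (ip x x) = 0"
  using hilbert unfolding hilbert_space_def by metis

lemma ip_self_Re_nonneg: "Re (ip x x) \<ge> 0"
  using hilbert unfolding hilbert_space_def by metis

lemma ip_self_eq_0D: "ip x x = 0 \<Longrightarrow> x = 0"
  using hilbert unfolding hilbert_space_def by metis

lemma hilbert_complete:
  "\<forall>e>0. \<exists>N. \<forall>m\<ge>N. \<forall>n\<ge>N. hnorm ip (s m - s n) < e \<Longrightarrow> \<exists>l. (\<lambda>n. hnorm ip (s n - l)) \<longlonglongrightarrow> 0"
  using hilbert unfolding hilbert_space_def by metis

lemma ip_zero_left [simp]: "ip 0 y = 0"
  using ip_add_left[of 0 0 y] by simp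

lemma ip_minus_left [simp]: "ip (- x) y = - ip x y"
  using ip_add_left[of x "- x" y] by (metis neg_eq_iff_add_eq_0 ip_zero_left right_minus)

lemma ip_diff_left: "ip (x - y) z = ip x z - ip y z"
  using ip_add_left[of x "- y" z] by simp

lemma ip_add_right: "ip x (y + z) = ip x y + ip x z"
  by (metis ip_conj_sym ip_add_left complex_cnj_add)

lemma ip_smul_right [simp]: "ip x (smul a y) = cnj a * ip x y"
  by (metis ip_conj_sym ip_smul_left complex_cnj_mult)

lemma ip_zero_right [simp]: "ip x 0 = 0"
  by (metis ip_conj_sym ip_zero_left complex_cnj_zero)

lemma ip_diff_right: "ip x (y - z) = ip x y - ip x z"
  by (metis ip_conj_sym ip_diff_left complex_cnj_diff)

lemma ip_sum_left: "ip (sum f F) y = (\<Sum>i\<in>F. ip (f i) y)"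
  by (induction F rule: infinite_finite_induct) (auto simp: ip_add_left)

lemma ip_sum_right: "ip y (sum f F) = (\<Sum>i\<in>F. ip y (f i))"
  by (induction F rule: infinite_finite_induct) (auto simp: ip_add_right)

lemma ip_self_real: "ip x x = of_real (Re (ip x x))"
  by (simp add: complex_eq_iff)

lemma ip_left_eqI:
  assumes "\<And>z. ip x z = ip y z"
  shows "x = y"
proof -
  have "ip (x - y) (x - y) = 0"
    using assms by (simp add: ip_diff_left)
  then show ?thesis
    using ip_self_eq_0D[of "x - y"] by simp
qed

lemma ip_right_eqI:
  assumes "\<And>z. ip z x = ip z y"
  shows "x = y"
  using ip_left_eqI[of x y] assms by (metis ip_conj_sym)

lemma power2_hnorm: "(hnorm ip x)\<^sup>2 = Re (ip x x)"
  unfolding hnorm_def using ip_self_Re_nonneg by simp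

lemma hnorm_nonneg: "hnorm ip x \<ge> 0"
  unfolding hnorm_def using ip_self_Re_nonneg by simp

lemma hnorm_minus_commute: "hnorm ip (x - y) = hnorm ip (y - x)"
proof -
  have "ip (x - y) (x - y) = ip (y - x) (y - x)"
    by (metis ip_minus_left ip_conj_sym complex_cnj_minus minus_diff_eq minus_minus)
  then show ?thesis unfolding hnorm_def by simp
qed

lemma nonneg_form_cauchy_schwarz:
  assumes add: "\<And>x y. K (x + y) = K x + K y" and hom: "\<And>a x. K (smul a x) = smul a (K x)"
    and sym: "\<And>x y. ip (K x) y = ip x (K y)" and nonneg: "\<And>x. Re (ip (K x) x) \<ge> 0"
  shows "(cmod (ip (K u) v))\<^sup>2 \<le> Re (ip (K u) u) * Re (ip (K v) v)"
proof -
  have K_diff: "K (x - y) = K x - K y" for x y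
    by (metis add diff_add_cancel eq_diff_eq)
  define z where "z = ip (K u) v"
  define a where "a = Re (ip (K u) u)"
  define c where "c = Re (ip (K v) v)"
  define b where "b = (cmod z)\<^sup>2"
  have "a \<ge> 0" "c \<ge> 0"
    using nonneg unfolding a_def c_def by auto
  have Kvu: "ip (K v) u = cnj z"
    unfolding z_def by (metis ip_conj_sym sym)
  have "Im (ip (K v) v) = 0"
    using sym[of v v] ip_conj_sym[of "K v" v] by (metis cnj.simps(2) neg_equal_zero)
  then have Kvv: "ip (K v) v = of_real c"
    unfolding c_def by (simp add: complex_eq_iff)
  have quadratic: "a - 2 * t * b + t\<^sup>2 * b * c \<ge> 0" for t :: real
  proof -
    define s where "s = of_real t * z"
    have zz: "z * cnj z = of_real b"
      unfolding b_def using complex_norm_square[of z] by simp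
    have "cnj s * z = of_real (t * b)" "s * cnj z = of_real (t * b)" "s * cnj s = of_real (t\<^sup>2 * b)"
      unfolding s_def using zz by (simp_all add: mult.commute mult.assoc power2_eq_square algebra_simps)
    then have "Re (ip (K u) u - cnj s * z - s * cnj z + s * cnj s * ip (K v) v) = a - 2 * t * b + t\<^sup>2 * b * c"
      unfolding Kvv a_def by (simp add: power2_eq_square)
    moreover have "ip (K (u - smul s v)) (u - smul s v) = ip (K u) u - cnj s * z - s * cnj z + s * cnj s * ip (K v) v"
      by (simp add: K_diff hom ip_diff_left ip_diff_right Kvu z_def algebra_simps)
    ultimately show ?thesis
      using nonneg[of "u - smul s v"] by simp
  qed
  have "b \<le> a * c"
  proof (cases "b = 0")
    case True
    then show ?thesis
      using \<open>a \<ge> 0\<close> \<open>c \<ge> 0\<close> by simp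
  next
    case False
    then have "b > 0"
      unfolding b_def by simp
    show ?thesis
    proof (cases "c = 0")
      case True
      then show ?thesis
        using quadratic[of "(a + 1) / (2 * b)"] \<open>b > 0\<close> by (simp add: field_simps)
    next
      case False
      then have "c > 0"
        using \<open>c \<ge> 0\<close> by simp
      then show ?thesis
        using quadratic[of "1 / c"] by (simp add: field_simps power2_eq_square)
    qed
  qed
  then show ?thesis
    unfolding b_def z_def a_def c_def .
qed

lemma cauchy_schwarz_square: "(cmod (ip u v))\<^sup>2 \<le> Re (ip u u) * Re (ip v v)"
  using nonneg_form_cauchy_schwarz[of "\<lambda>x. x"] ip_self_Re_nonneg by simp

lemma cauchy_schwarz: "cmod (ip u v) \<le> hnorm ip u * hnorm ip v"
proof -
  have "(cmod (ip u v))\<^sup>2 \<le> (hnorm ip u * hnorm ip v)\<^sup>2"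
    using cauchy_schwarz_square by (simp add: power_mult_distrib power2_hnorm)
  then show ?thesis
    using hnorm_nonneg by (meson mult_nonneg_nonneg power2_le_imp_le)
qed

section \<open>Bounded and positive operators\<close>

lemma bounded_op_add: "bounded_op smul ip K \<Longrightarrow> K (x + y) = K x + K y"
  unfolding bounded_op_def by blast

lemma bounded_op_smul: "bounded_op smul ip K \<Longrightarrow> K (smul a x) = smul a (K x)"
  unfolding bounded_op_def by blast

lemma bounded_op_zero: "bounded_op smul ip K \<Longrightarrow> K 0 = 0"
  using bounded_op_add[of K 0 0] by simp

lemma bounded_op_diff: "bounded_op smul ip K \<Longrightarrow> K (x - y) = K x - K y"
  using bounded_op_add[of K "x - y" y] by (metis add_diff_cancel diff_add_cancel)

lemma bounded_op_sum: "bounded_op smul ip K \<Longrightarrow> K (sum f F) = (\<Sum>i\<in>F. K (f i))"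
  by (induction F rule: infinite_finite_induct) (auto simp: bounded_op_add bounded_op_zero)

lemma bounded_op_nonneg_bound:
  assumes "bounded_op smul ip K"
  obtains C where "C \<ge> 0" "\<And>x. hnorm ip (K x) \<le> C * hnorm ip x"
proof -
  obtain C where C: "\<And>x. hnorm ip (K x) \<le> C * hnorm ip x"
    using assms unfolding bounded_op_def by blast
  have "hnorm ip (K x) \<le> \<bar>C\<bar> * hnorm ip x" for x
    using C[of x] mult_right_mono[OF abs_ge_self hnorm_nonneg, of C x] by linarith
  then show ?thesis
    using that[of "\<bar>C\<bar>"] by simp
qed

lemma positive_op_bounded: "positive_op smul ip K \<Longrightarrow> bounded_op smul ip K"
  unfolding positive_op_def by blast

lemma positive_op_Im: "positive_op smul ip K \<Longrightarrow> Im (ip (K x) x) = 0"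
  unfolding positive_op_def by blast

lemma positive_op_Re_nonneg: "positive_op smul ip K \<Longrightarrow> Re (ip (K x) x) \<ge> 0"
  unfolding positive_op_def by blast

text \<open>Over \<open>\<complex>\<close>, a real quadratic form determines the sesquilinear form by polarization,
  so positive operators are self-adjoint.\<close>
lemma positive_op_selfadjoint:
  assumes K: "positive_op smul ip K"
  shows "ip (K x) y = ip x (K y)"
proof -
  have B: "bounded_op smul ip K"
    using K by (rule positive_op_bounded)
  define a where "a = ip (K x) y"
  define b where "b = ip (K y) x"
  have "Im (ip (K (x + y)) (x + y)) = 0"
    using K by (rule positive_op_Im)
  then have Im: "Im (a + b) = 0"
    using positive_op_Im[OF K, of x] positive_op_Im[OF K, of y]
    by (simp add: bounded_op_add[OF B] ip_add_left ip_add_right a_def b_def)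
  have "Im (ip (K (x + smul \<i> y)) (x + smul \<i> y)) = 0"
    using K by (rule positive_op_Im)
  then have "Im (ip (K x) x + (- \<i>) * a + \<i> * b + ip (K y) y) = 0"
    by (simp add: bounded_op_add[OF B] bounded_op_smul[OF B] ip_add_left ip_add_right a_def b_def)
  then have Re: "Re b - Re a = 0"
    using positive_op_Im[OF K, of x] positive_op_Im[OF K, of y] by simp
  have "b = cnj a"
    using Im Re by (simp add: complex_eq_iff)
  then show ?thesis
    unfolding a_def b_def by (metis ip_conj_sym complex_cnj_cnj)
qed

lemma positive_op_cauchy_schwarz:
  assumes K: "positive_op smul ip K"
  shows "(cmod (ip (K u) v))\<^sup>2 \<le> Re (ip (K u) u) * Re (ip (K v) v)"
  using K by (intro nonneg_form_cauchy_schwarz bounded_op_add bounded_op_smul positive_op_bounded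
      positive_op_selfadjoint positive_op_Re_nonneg)

lemma positive_op_eq_0:
  assumes K: "positive_op smul ip K" and "Re (ip (K u) u) = 0"
  shows "K u = 0"
proof -
  have "(cmod (ip (K u) (K u)))\<^sup>2 \<le> 0"
    using positive_op_cauchy_schwarz[OF K, of u "K u"] assms(2) by simp
  then show ?thesis
    by (simp add: ip_self_eq_0D)
qed

lemma adj_selfadjoint:
  assumes sym: "\<And>x y. ip (K x) y = ip x (K y)"
  shows "adj ip K = K"
proof
  have "\<forall>x y. ip (K x) y = ip x (adj ip K y)"
    unfolding adj_def by (rule someI_ex[of "\<lambda>S. \<forall>x y. ip (K x) y = ip x (S y)"]) (use sym in blast)
  then show "adj ip K y = K y" for y
    by (intro ip_right_eqI) (simp add: sym)
qed

lemma unitary_op_adj: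
  assumes "unitary_op smul ip V"
  shows "ip (V a) b = ip a (adj ip V b)"
proof -
  have "surj V" and iso: "\<And>x y. ip (V x) (V y) = ip x y"
    using assms unfolding unitary_op_def by auto
  then have "ip (V x) y = ip x (inv V y)" for x y
    by (metis iso surj_f_inv_f)
  then have "\<forall>x y. ip (V x) y = ip x (adj ip V y)"
    unfolding adj_def by (intro someI_ex[of "\<lambda>S. \<forall>x y. ip (V x) y = ip x (S y)"]) blast
  then show ?thesis
    by blast
qed

section \<open>Orthonormal bases and Parseval's identity\<close>

definition orthonormal :: "'h set \<Rightarrow> bool" where
  "orthonormal E \<longleftrightarrow> (\<forall>e\<in>E. ip e e = 1) \<and> (\<forall>e\<in>E. \<forall>f\<in>E. e \<noteq> f \<longrightarrow> ip e f = 0)"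

lemma orthonormal_ip_self: "orthonormal E \<Longrightarrow> e \<in> E \<Longrightarrow> ip e e = 1"
  unfolding orthonormal_def by simp

lemma orthonormal_ip_distinct: "orthonormal E \<Longrightarrow> e \<in> E \<Longrightarrow> f \<in> E \<Longrightarrow> e \<noteq> f \<Longrightarrow> ip e f = 0"
  unfolding orthonormal_def by simp

lemma onb_orthonormal: "onb ip E \<Longrightarrow> orthonormal E"
  unfolding onb_def orthonormal_def by simp

lemma onb_orthogonal_eq_0: "onb ip E \<Longrightarrow> (\<And>e. e \<in> E \<Longrightarrow> ip x e = 0) \<Longrightarrow> x = 0"
  unfolding onb_def by simp

lemma orthonormalI:
  assumes "\<And>e. e \<in> E \<Longrightarrow> ip e e = 1" "\<And>e f. e \<in> E \<Longrightarrow> f \<in> E \<Longrightarrow> e \<noteq> f \<Longrightarrow> ip e f = 0"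
  shows "orthonormal E"
  unfolding orthonormal_def using assms by simp

lemma orthonormal_Union_chain:
  assumes C: "C \<in> chains {E. orthonormal E}"
  shows "orthonormal (\<Union>C)"
proof (rule orthonormalI)
  have on: "orthonormal X" if "X \<in> C" for X
    using chainsD2[OF C] that by blast
  show "ip e e = 1" if "e \<in> \<Union>C" for e
    using that on orthonormal_ip_self by blast
  show "ip e f = 0" if ef: "e \<in> \<Union>C" "f \<in> \<Union>C" and "e \<noteq> f" for e f
  proof -
    obtain X Y where "X \<in> C" "Y \<in> C" "e \<in> X" "f \<in> Y"
      using ef by blast
    then obtain Z where "Z \<in> C" "e \<in> Z" "f \<in> Z"
      using chainsD[OF C, of X Y] by blast
    then show ?thesis
      using on orthonormal_ip_distinct \<open>e \<noteq> f\<close> by blast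
  qed
qed

lemma orthonormal_insert:
  assumes E: "orthonormal E" and "ip e e = 1" and orth: "\<And>f. f \<in> E \<Longrightarrow> ip e f = 0"
  shows "orthonormal (insert e E)"
proof (rule orthonormalI)
  have "ip f e = 0" if "f \<in> E" for f
    using orth[OF that] ip_conj_sym[of f e] by simp
  then show "ip f g = 0" if "f \<in> insert e E" "g \<in> insert e E" "f \<noteq> g" for f g
    using that orth orthonormal_ip_distinct[OF E] by auto
qed (use assms orthonormal_ip_self in auto)

lemma normalize_ip_self:
  assumes "x \<noteq> 0"
  shows "ip (smul (of_real (1 / hnorm ip x)) x) (smul (of_real (1 / hnorm ip x)) x) = 1"
proof -
  have "Re (ip x x) > 0"
    using assms ip_self_eq_0D ip_self_real[of x] ip_self_Re_nonneg[of x] by (metis less_eq_real_def of_real_0)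
  then show ?thesis
    by (subst ip_self_real) (simp add: hnorm_def flip: of_real_mult)
qed

lemma onb_exists: "\<exists>E. onb ip E"
proof -
  obtain E where E: "orthonormal E" and maximal: "\<And>X. orthonormal X \<Longrightarrow> E \<subseteq> X \<Longrightarrow> X = E"
    using Zorn_Lemma[of "{E. orthonormal E}"] orthonormal_Union_chain by auto
  have "x = 0" if orth: "\<And>e. e \<in> E \<Longrightarrow> ip x e = 0" for x
  proof (rule ccontr)
    assume "x \<noteq> 0"
    define u where "u = smul (of_real (1 / hnorm ip x)) x"
    have "ip u u = 1"
      unfolding u_def using \<open>x \<noteq> 0\<close> by (rule normalize_ip_self)
    moreover have "ip u f = 0" if "f \<in> E" for f
      unfolding u_def using orth that by simp
    ultimately have "u \<notin> E" and "orthonormal (insert u E)"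
      using E by (force, intro orthonormal_insert)
    then show False
      using maximal by blast
  qed
  then have "onb ip E"
    using E unfolding onb_def orthonormal_def by blast
  then show ?thesis ..
qed

lemma orthonormal_sum_coeff:
  assumes E: "orthonormal E" and F: "F \<subseteq> E" "finite F" and e: "e \<in> E"
  shows "(\<Sum>f\<in>F. c f * ip f e) = (if e \<in> F then c e else 0)"
proof -
  have "(\<Sum>f\<in>F. c f * ip f e) = (\<Sum>f\<in>F. if f = e then c e else 0)"
    using F e orthonormal_ip_self[OF E] orthonormal_ip_distinct[OF E] by (intro sum.cong) auto
  then show ?thesis
    using F(2) by (simp add: sum.delta')
qed

definition span_proj :: "'h set \<Rightarrow> 'h \<Rightarrow> 'h" where
  "span_proj F x = (\<Sum>e\<in>F. smul (ip x e) e)"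

lemma ip_span_proj_left: "ip (span_proj F x) y = (\<Sum>e\<in>F. ip x e * ip e y)"
  unfolding span_proj_def by (simp add: ip_sum_left)

lemma ip_span_proj_basis:
  assumes "orthonormal E" "F \<subseteq> E" "finite F" "e \<in> E"
  shows "ip (span_proj F x) e = (if e \<in> F then ip x e else 0)"
  unfolding ip_span_proj_left using assms by (rule orthonormal_sum_coeff)

lemma ip_span_proj_self:
  assumes E: "orthonormal E" and F: "F \<subseteq> E" "finite F"
  shows "ip (span_proj F x) (span_proj F x) = of_real (\<Sum>e\<in>F. (cmod (ip x e))\<^sup>2)"
proof -
  have "ip (span_proj F x) (span_proj F x) = (\<Sum>e\<in>F. ip x e * ip e (span_proj F x))"
    by (rule ip_span_proj_left)
  also have "\<dots> = (\<Sum>e\<in>F. ip x e * cnj (ip (span_proj F x) e))"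
    by (simp only: ip_conj_sym[of _ "span_proj F x"])
  also have "\<dots> = (\<Sum>e\<in>F. ip x e * cnj (ip x e))"
    using F ip_span_proj_basis[OF E F] by (intro sum.cong) auto
  finally show ?thesis
    by (simp add: complex_mult_cnj cmod_power2)
qed

lemma bessel_identity:
  assumes "orthonormal E" "F \<subseteq> E" "finite F"
  shows "Re (ip (x - span_proj F x) (x - span_proj F x)) = Re (ip x x) - (\<Sum>e\<in>F. (cmod (ip x e))\<^sup>2)"
proof -
  have "ip x e * ip e x = of_real ((cmod (ip x e))\<^sup>2)" for e
    using complex_mult_cnj[of "ip x e"] ip_conj_sym[of e x] by (simp add: cmod_power2)
  then have px: "ip (span_proj F x) x = of_real (\<Sum>e\<in>F. (cmod (ip x e))\<^sup>2)"
    unfolding ip_span_proj_left by simp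
  then have "ip x (span_proj F x) = of_real (\<Sum>e\<in>F. (cmod (ip x e))\<^sup>2)"
    by (metis complex_cnj_complex_of_real ip_conj_sym)
  with px show ?thesis
    using ip_span_proj_self[OF assms, of x] by (simp add: ip_diff_left ip_diff_right)
qed

lemma bessel_inequality:
  assumes "orthonormal E" "F \<subseteq> E" "finite F"
  shows "(\<Sum>e\<in>F. (cmod (ip x e))\<^sup>2) \<le> Re (ip x x)"
  using bessel_identity[OF assms, of x] ip_self_Re_nonneg[of "x - span_proj F x"] by simp

lemma span_proj_diff:
  assumes "F \<subseteq> G" "finite G"
  shows "span_proj G x - span_proj F x = span_proj (G - F) x"
  unfolding span_proj_def using sum.subset_diff[OF assms, of "\<lambda>e. smul (ip x e) e"] by simp

end

lemma has_sum_exhausting_subsets: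
  fixes f :: "'a \<Rightarrow> real"
  assumes nonneg: "\<And>e. e \<in> E \<Longrightarrow> f e \<ge> 0" and sum: "(f has_sum s) E"
  obtains F where "\<And>n. finite (F n)" "\<And>n. F n \<subseteq> E" "incseq F"
    "\<And>n. s - sum f (F n) < inverse (real (Suc n))"
proof -
  have "\<exists>G. finite G \<and> G \<subseteq> E \<and> s - sum f G < inverse (real (Suc n))" for n
  proof -
    have "s - inverse (real (Suc n)) < s"
      by simp
    then have "eventually (\<lambda>G. s - inverse (real (Suc n)) < sum f G) (finite_subsets_at_top E)"
      using sum unfolding has_sum_def by (rule order_tendstoD(1)[rotated])
    then obtain X where "finite X" "X \<subseteq> E"
      "\<forall>Y. finite Y \<and> X \<subseteq> Y \<and> Y \<subseteq> E \<longrightarrow> s - inverse (real (Suc n)) < sum f Y"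
      unfolding eventually_finite_subsets_at_top by blast
    then show ?thesis
      by (intro exI[of _ X]) auto
  qed
  then obtain G where G: "\<And>n. finite (G n)" "\<And>n. G n \<subseteq> E"
    "\<And>n. s - sum f (G n) < inverse (real (Suc n))"
    by metis
  define F where "F n = (\<Union>k\<le>n. G k)" for n
  have "finite (F n)" "F n \<subseteq> E" for n
    unfolding F_def using G by auto
  moreover have "incseq F"
    unfolding F_def by (intro monoI UN_mono) auto
  moreover have "s - sum f (F n) < inverse (real (Suc n))" for n
  proof -
    have "sum f (G n) \<le> sum f (F n)"
      using \<open>finite (F n)\<close> \<open>F n \<subseteq> E\<close> nonneg by (intro sum_mono2) (auto simp: F_def)
    then show ?thesis
      using G(3)[of n] by simp
  qed
  ultimately show ?thesis
    by (rule that)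
qed

context hilbert
begin

lemma tendsto_ip_left:
  assumes "(\<lambda>n. hnorm ip (z n - l)) \<longlonglongrightarrow> 0"
  shows "(\<lambda>n. ip (z n) y) \<longlonglongrightarrow> ip l y"
proof (rule LIM_zero_cancel, rule Lim_null_comparison)
  have "cmod (ip (z n) y - ip l y) \<le> hnorm ip (z n - l) * hnorm ip y" for n
    using cauchy_schwarz[of "z n - l" y] by (simp add: ip_diff_left)
  then show "\<forall>\<^sub>F n in sequentially. norm (ip (z n) y - ip l y) \<le> hnorm ip (z n - l) * hnorm ip y"
    by simp
  show "(\<lambda>n. hnorm ip (z n - l) * hnorm ip y) \<longlonglongrightarrow> 0"
    using tendsto_mult_left_zero[OF assms] .
qed

lemma hnorm_Cauchy_if_square_gap:
  assumes gap: "\<And>m n. n \<le> m \<Longrightarrow> (hnorm ip (z m - z n))\<^sup>2 < inverse (real (Suc n))"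
  shows "\<forall>\<epsilon>>0. \<exists>N. \<forall>m\<ge>N. \<forall>n\<ge>N. hnorm ip (z m - z n) < \<epsilon>"
proof (intro allI impI)
  fix \<epsilon> :: real
  assume "\<epsilon> > 0"
  obtain N where N: "inverse (real (Suc N)) < \<epsilon>\<^sup>2"
    using reals_Archimedean[of "\<epsilon>\<^sup>2"] \<open>\<epsilon> > 0\<close> by auto
  have less: "hnorm ip (z m - z n) < \<epsilon>" if "N \<le> n" "n \<le> m" for m n
  proof -
    have "(hnorm ip (z m - z n))\<^sup>2 < inverse (real (Suc n))"
      using gap[OF that(2)] .
    also have "\<dots> \<le> inverse (real (Suc N))"
      using that(1) by (simp add: field_simps)
    also have "\<dots> < \<epsilon>\<^sup>2"
      by (rule N)
    finally show ?thesis
      using \<open>\<epsilon> > 0\<close> by (simp add: power_less_imp_less_base)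
  qed
  have "hnorm ip (z m - z n) < \<epsilon>" if "N \<le> m" "N \<le> n" for m n
    using less[of n m] less[of m n] hnorm_minus_commute[of "z m" "z n"] that by (cases "n \<le> m") auto
  then show "\<exists>N. \<forall>m\<ge>N. \<forall>n\<ge>N. hnorm ip (z m - z n) < \<epsilon>"
    by blast
qed

lemma residual_coeff_le_tail:
  assumes E: "orthonormal E" and sum: "((\<lambda>e. (cmod (ip x e))\<^sup>2) has_sum s) E"
    and F: "F \<subseteq> E" "finite F" and e: "e \<in> E"
  shows "(cmod (ip (x - span_proj F x) e))\<^sup>2 \<le> s - (\<Sum>e\<in>F. (cmod (ip x e))\<^sup>2)"
proof (cases "e \<in> F")
  case True
  then show ?thesis
    using ip_span_proj_basis[OF E F e] finite_sum_le_has_sum[OF sum F(2,1)]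
    by (simp add: ip_diff_left)
next
  case False
  then have "(\<Sum>e\<in>insert e F. (cmod (ip x e))\<^sup>2) \<le> s"
    using finite_sum_le_has_sum[OF sum, of "insert e F"] F e by simp
  then show ?thesis
    using False ip_span_proj_basis[OF E F e] F(2) by (simp add: ip_diff_left)
qed

text \<open>Completeness enters here: the partial expansions along an exhausting sequence of finite
  subsets of the basis converge, and their limit has the same coefficients as \<open>x\<close>.\<close>
lemma span_proj_exhausting_tendsto:
  assumes E: "onb ip E" and sum: "((\<lambda>e. (cmod (ip x e))\<^sup>2) has_sum s) E"
    and F: "\<And>n. finite (F n)" "\<And>n. F n \<subseteq> E" "incseq F"
    and gap: "\<And>n. s - (\<Sum>e\<in>F n. (cmod (ip x e))\<^sup>2) < inverse (real (Suc n))"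
  shows "(\<lambda>n. hnorm ip (span_proj (F n) x - x)) \<longlonglongrightarrow> 0"
proof -
  define f where "f e = (cmod (ip x e))\<^sup>2" for e
  define z where "z n = span_proj (F n) x" for n
  have E': "orthonormal E"
    using E by (rule onb_orthonormal)
  have "(hnorm ip (z m - z n))\<^sup>2 < inverse (real (Suc n))" if "n \<le> m" for m n
  proof -
    have sub: "F n \<subseteq> F m"
      using \<open>incseq F\<close> that by (simp add: incseq_def)
    have "F m - F n \<subseteq> E" "finite (F m - F n)"
      using F by auto
    then have "(hnorm ip (z m - z n))\<^sup>2 = sum f (F m - F n)"
      unfolding z_def span_proj_diff[OF sub F(1)] power2_hnorm f_def
      by (simp add: ip_span_proj_self[OF E'])
    also have "\<dots> = sum f (F m) - sum f (F n)"
      using sum.subset_diff[OF sub F(1), of f] by simp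
    also have "\<dots> < inverse (real (Suc n))"
      using finite_sum_le_has_sum[OF sum F(1,2), of m] gap[of n] unfolding f_def by simp
    finally show ?thesis .
  qed
  then obtain l where l: "(\<lambda>n. hnorm ip (z n - l)) \<longlonglongrightarrow> 0"
    using hilbert_complete[OF hnorm_Cauchy_if_square_gap] by blast
  have "ip (x - l) e = 0" if e: "e \<in> E" for e
  proof -
    have "(\<lambda>n. ip (x - z n) e) \<longlonglongrightarrow> 0"
    proof (rule Lim_null_comparison)
      show "(\<lambda>n. sqrt (inverse (real (Suc n)))) \<longlonglongrightarrow> 0"
        using tendsto_real_sqrt[OF LIMSEQ_inverse_real_of_nat] by simp
      have "(cmod (ip (x - z n) e))\<^sup>2 \<le> inverse (real (Suc n))" for n
        unfolding z_def using residual_coeff_le_tail[OF E' sum F(2,1) e, of n] gap[of n] by simp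
      then show "\<forall>\<^sub>F n in sequentially. norm (ip (x - z n) e) \<le> sqrt (inverse (real (Suc n)))"
        by (simp add: real_le_rsqrt)
    qed
    moreover have "(\<lambda>n. ip (x - z n) e) \<longlonglongrightarrow> ip x e - ip l e"
      unfolding ip_diff_left by (intro tendsto_diff tendsto_const tendsto_ip_left l)
    ultimately show ?thesis
      using LIMSEQ_unique by (fastforce simp: ip_diff_left)
  qed
  then have "l = x"
    using onb_orthogonal_eq_0[OF E, of "x - l"] by simp
  then show ?thesis
    using l unfolding z_def by simp
qed

lemma parseval_norm:
  assumes E: "onb ip E"
  shows "((\<lambda>e. (cmod (ip x e))\<^sup>2) has_sum Re (ip x x)) E"
proof -
  define f where "f e = (cmod (ip x e))\<^sup>2" for e
  have bessel: "sum f G \<le> Re (ip x x)" if "finite G" "G \<subseteq> E" for G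
    unfolding f_def using bessel_inequality[OF onb_orthonormal[OF E]] that by blast
  have "f summable_on E"
  proof (rule nonneg_bdd_above_summable_on)
    show "bdd_above (sum f ` {G. G \<subseteq> E \<and> finite G})"
      using bessel by (intro bdd_aboveI[where M = "Re (ip x x)"]) auto
  qed (simp add: f_def)
  then obtain s where sum: "(f has_sum s) E"
    using has_sum_infsum by blast
  obtain F where F: "\<And>n. finite (F n)" "\<And>n. F n \<subseteq> E" "incseq F"
    and gap: "\<And>n. s - sum f (F n) < inverse (real (Suc n))"
    using has_sum_exhausting_subsets[OF _ sum] by (auto simp: f_def)
  have "(\<lambda>n. (hnorm ip (span_proj (F n) x - x))\<^sup>2) \<longlonglongrightarrow> 0"
    using tendsto_power[OF span_proj_exhausting_tendsto[OF E sum[unfolded f_def] F gap[unfolded f_def]], of 2]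
    by simp
  moreover have "(hnorm ip (span_proj (F n) x - x))\<^sup>2 = Re (ip x x) - sum f (F n)" for n
    using bessel_identity[OF onb_orthonormal[OF E] F(2,1)] hnorm_minus_commute
    by (simp add: power2_hnorm f_def)
  ultimately have "(\<lambda>n. sum f (F n)) \<longlonglongrightarrow> Re (ip x x)"
    using tendsto_diff[OF tendsto_const[of "Re (ip x x)"]] by (force simp: LIM_zero_iff)
  moreover have "(\<lambda>n. sum f (F n)) \<longlonglongrightarrow> s"
  proof (rule tendsto_sandwich)
    show "\<forall>\<^sub>F n in sequentially. s - inverse (real (Suc n)) \<le> sum f (F n)"
      using gap by (simp add: less_imp_le algebra_simps)
    show "\<forall>\<^sub>F n in sequentially. sum f (F n) \<le> s"
      using finite_sum_le_has_sum[OF sum F(1,2)] by (simp add: f_def)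
    show "(\<lambda>n. s - inverse (real (Suc n))) \<longlonglongrightarrow> s"
      using tendsto_diff[OF tendsto_const LIMSEQ_inverse_real_of_nat] by simp
  qed simp
  ultimately have "s = Re (ip x x)"
    by (rule LIMSEQ_unique[rotated])
  then show ?thesis
    using sum unfolding f_def by simp
qed

lemma parseval:
  assumes E: "onb ip E"
  shows "((\<lambda>e. ip x e * ip e y) has_sum ip x y) E"
proof -
  define f where "f e = (cmod (ip x e))\<^sup>2" for e
  define r where "r F = sqrt (Re (ip x x) - sum f F) * hnorm ip y" for F
  have "(sum f \<longlongrightarrow> Re (ip x x)) (finite_subsets_at_top E)"
    using parseval_norm[OF E, of x] unfolding has_sum_def f_def .
  then have "(r \<longlongrightarrow> sqrt (Re (ip x x) - Re (ip x x)) * hnorm ip y) (finite_subsets_at_top E)"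
    unfolding r_def by (intro tendsto_intros)
  then have r: "(r \<longlongrightarrow> 0) (finite_subsets_at_top E)"
    by simp
  have "norm ((\<Sum>e\<in>F. ip x e * ip e y) - ip x y) \<le> r F" if "finite F" "F \<subseteq> E" for F
  proof -
    have "norm ((\<Sum>e\<in>F. ip x e * ip e y) - ip x y) = cmod (ip (x - span_proj F x) y)"
      by (simp add: ip_diff_left ip_span_proj_left norm_minus_commute)
    also have "\<dots> \<le> hnorm ip (x - span_proj F x) * hnorm ip y"
      by (rule cauchy_schwarz)
    also have "hnorm ip (x - span_proj F x) = sqrt (Re (ip x x) - sum f F)"
      unfolding hnorm_def f_def using bessel_identity[OF onb_orthonormal[OF E] that(2,1)] by simp
    finally show ?thesis
      unfolding r_def .
  qed
  then have "eventually (\<lambda>F. norm ((\<Sum>e\<in>F. ip x e * ip e y) - ip x y) \<le> r F) (finite_subsets_at_top E)"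
    by (intro eventually_finite_subsets_at_top_weakI)
  then have "((\<lambda>F. (\<Sum>e\<in>F. ip x e * ip e y) - ip x y) \<longlongrightarrow> 0) (finite_subsets_at_top E)"
    using r by (rule Lim_null_comparison)
  then show ?thesis
    unfolding has_sum_def by (rule LIM_zero_cancel)
qed

lemma selfadjoint_eq_0_if_basis:
  assumes E: "onb ip E" and sym: "\<And>x y. ip (T x) y = ip x (T y)"
    and zero: "\<And>e. e \<in> E \<Longrightarrow> T e = 0"
  shows "T v = 0"
proof (rule ip_left_eqI)
  fix y
  have "((\<lambda>e. ip v e * ip e (T y)) has_sum ip v (T y)) E"
    by (rule parseval[OF E])
  moreover have "((\<lambda>e. ip v e * ip e (T y)) has_sum 0) E"
    by (rule has_sum_0) (simp add: zero flip: sym)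
  ultimately show "ip (T v) y = ip 0 y"
    by (simp add: sym has_sum_unique)
qed

section \<open>Square roots of positive operators with summable diagonal\<close>

lemma square_coeffs_summable_on_Times:
  assumes E: "onb ip E" and K: "(\<lambda>e. (hnorm ip (K e))\<^sup>2) summable_on E"
  shows "(\<lambda>(e, f). (cmod (ip (K e) f))\<^sup>2) summable_on (E \<times> E)"
proof -
  have "(\<lambda>p. (cmod (ip (K (fst p)) (snd p)))\<^sup>2) summable_on Sigma E (\<lambda>_. E)"
  proof (rule summable_on_SigmaI)
    show "((\<lambda>f. (cmod (ip (K (fst (e, f))) (snd (e, f))))\<^sup>2) has_sum (hnorm ip (K e))\<^sup>2) E" for e
      using parseval_norm[OF E, of "K e"] by (simp add: power2_hnorm)
  qed (use K in auto)
  then show ?thesis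
    by (simp add: case_prod_unfold)
qed

text \<open>The cyclicity \<open>tr (Y\<^sup>* X) = tr (X Y\<^sup>*)\<close> of the trace for Hilbert--Schmidt operators,
  written out in the basis: the double sum \<open>\<Sum>\<^sub>e \<Sum>\<^sub>f \<langle>X e, f\<rangle> \<langle>f, Y e\<rangle>\<close> converges absolutely
  and can be summed in either order.\<close>
lemma trace_product_swap:
  assumes E: "onb ip E"
    and X: "(\<lambda>e. (hnorm ip (X e))\<^sup>2) summable_on E" and Y: "(\<lambda>e. (hnorm ip (Y e))\<^sup>2) summable_on E"
    and X_adj: "\<And>a b. ip (X a) b = ip a (X' b)" and Y_adj: "\<And>a b. ip (Y a) b = ip a (Y' b)"
  obtains S where "((\<lambda>e. ip (X e) (Y e)) has_sum S) E" "((\<lambda>f. ip (Y' f) (X' f)) has_sum S) E"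
proof -
  define g where "g = (\<lambda>(e, f). ip (X e) f * ip f (Y e))"
  have "cmod a * cmod b \<le> (1/2) * ((cmod a)\<^sup>2 + (cmod b)\<^sup>2)" for a b
    using sum_squares_bound[of "cmod a" "cmod b"] by (simp add: algebra_simps power2_eq_square)
  moreover have "cmod (ip f (Y e)) = cmod (ip (Y e) f)" for e f
    by (subst ip_conj_sym) (rule complex_mod_cnj)
  ultimately have bound: "norm (g p) \<le> (1/2) * ((\<lambda>(e, f). (cmod (ip (X e) f))\<^sup>2) p + (\<lambda>(e, f). (cmod (ip (Y e) f))\<^sup>2) p)"
    for p
    unfolding g_def case_prod_unfold by (simp add: norm_mult)
  have "(\<lambda>p. norm (g p)) summable_on (E \<times> E)"
    by (rule summable_on_comparison_test[OF summable_on_cmult_right[where c = "1/2", OF summable_on_add[OF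
          square_coeffs_summable_on_Times[OF E X] square_coeffs_summable_on_Times[OF E Y]]]])
      (use bound in simp_all)
  then have "g summable_on (E \<times> E)"
    by (rule abs_summable_summable)
  then obtain S where g: "(g has_sum S) (E \<times> E)"
    using has_sum_infsum by blast
  have "((\<lambda>e. ip (X e) (Y e)) has_sum S) E"
  proof (rule has_sum_SigmaD[where B = "\<lambda>_. E"])
    show "((\<lambda>f. g (e, f)) has_sum ip (X e) (Y e)) E" for e
      unfolding g_def using parseval[OF E, of "X e" "Y e"] by simp
  qed (use g in simp)
  moreover have "((\<lambda>f. ip (Y' f) (X' f)) has_sum S) E"
  proof (rule has_sum_SigmaD[where B = "\<lambda>_. E"])
    have "ip f (Y e) = ip (Y' f) e" for e f
      using Y_adj[of e f] ip_conj_sym[of f "Y e"] ip_conj_sym[of "Y' f" e] by simp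
    then have "ip (X e) f * ip f (Y e) = ip (Y' f) e * ip e (X' f)" for e f
      by (simp add: X_adj)
    then show "((\<lambda>e. (\<lambda>(f, e). g (e, f)) (f, e)) has_sum ip (Y' f) (X' f)) E" for f
      unfolding g_def using parseval[OF E, of "Y' f" "X' f"] by simp
    show "((\<lambda>(f, e). g (e, f)) has_sum S) (Sigma E (\<lambda>_. E))"
      using has_sum_swap[THEN iffD1, OF g] by simp
  qed
  ultimately show ?thesis
    by (rule that)
qed

lemma positive_op_hilbert_schmidt:
  assumes Q: "positive_op smul ip Q" and trace: "(\<lambda>e. Re (ip (Q e) e)) summable_on E"
  shows "(\<lambda>e. (hnorm ip (Q e))\<^sup>2) summable_on E"
proof -
  obtain C where "C \<ge> 0" and C: "\<And>x. hnorm ip (Q x) \<le> C * hnorm ip x"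
    using bounded_op_nonneg_bound[OF positive_op_bounded[OF Q]] by blast
  have "(hnorm ip (Q e))\<^sup>2 \<le> C * Re (ip (Q e) e)" for e
  proof -
    define a where "a = (hnorm ip (Q e))\<^sup>2"
    have "cmod (ip (Q e) (Q e)) = a"
      unfolding a_def power2_hnorm by (subst ip_self_real) (simp add: ip_self_Re_nonneg)
    then have "a\<^sup>2 \<le> Re (ip (Q e) e) * Re (ip (Q (Q e)) (Q e))"
      using positive_op_cauchy_schwarz[OF Q, of e "Q e"] by simp
    also have "\<dots> \<le> Re (ip (Q e) e) * (C * a)"
    proof (rule mult_left_mono[OF _ positive_op_Re_nonneg[OF Q]])
      have "Re (ip (Q (Q e)) (Q e)) \<le> hnorm ip (Q (Q e)) * hnorm ip (Q e)"
        using complex_Re_le_cmod cauchy_schwarz order_trans by blast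
      also have "\<dots> \<le> C * hnorm ip (Q e) * hnorm ip (Q e)"
        by (rule mult_right_mono[OF C hnorm_nonneg])
      finally show "Re (ip (Q (Q e)) (Q e)) \<le> C * a"
        unfolding a_def by (simp add: power2_eq_square)
    qed
    finally have "a * a \<le> (C * Re (ip (Q e) e)) * a"
      by (simp add: power2_eq_square algebra_simps)
    moreover have "a \<ge> 0" "C * Re (ip (Q e) e) \<ge> 0"
      unfolding a_def using \<open>C \<ge> 0\<close> positive_op_Re_nonneg[OF Q] by auto
    ultimately show ?thesis
      unfolding a_def[symmetric] by (cases "a = 0") (auto simp: mult_le_cancel_right)
  qed
  then show ?thesis
    by (intro summable_on_comparison_test[OF summable_on_cmult_right[OF trace, of C]]) auto
qed

lemma hnorm_diff_square_le: "(hnorm ip (a - b))\<^sup>2 \<le> 2 * (hnorm ip a)\<^sup>2 + 2 * (hnorm ip b)\<^sup>2"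
proof -
  have "Re (ip (a - b) (a - b)) + Re (ip (a + b) (a + b)) = 2 * Re (ip a a) + 2 * Re (ip b b)"
    by (simp add: ip_diff_left ip_diff_right ip_add_left ip_add_right)
  then show ?thesis
    using ip_self_Re_nonneg[of "a + b"] unfolding power2_hnorm by linarith
qed

lemma positive_ops_eq_if_diff_traces_vanish:
  assumes E: "onb ip E" and P: "positive_op smul ip P" and Q: "positive_op smul ip Q"
  defines "T x \<equiv> P x - Q x"
  assumes sum0: "((\<lambda>e. Re (ip (P (T e)) (T e)) + Re (ip (Q (T e)) (T e))) has_sum 0) E"
  shows "P v = Q v"
proof -
  have T_sym: "ip (T x) y = ip x (T y)" for x y
    unfolding T_def by (simp add: ip_diff_left ip_diff_right positive_op_selfadjoint[OF P]
        positive_op_selfadjoint[OF Q])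
  have "T e = 0" if "e \<in> E" for e
  proof -
    have "Re (ip (P (T d)) (T d)) + Re (ip (Q (T d)) (T d)) \<ge> 0" for d
      by (simp add: positive_op_Re_nonneg[OF P] positive_op_Re_nonneg[OF Q] add_nonneg_nonneg)
    then have "Re (ip (P (T e)) (T e)) + Re (ip (Q (T e)) (T e)) = 0"
      using nonneg_has_sum_le_0D[OF sum0 order_refl _ \<open>e \<in> E\<close>] by blast
    then have "P (T e) = 0" "Q (T e) = 0"
      using positive_op_Re_nonneg[OF P, of "T e"] positive_op_Re_nonneg[OF Q, of "T e"]
      by (auto intro: positive_op_eq_0[OF P] positive_op_eq_0[OF Q])
    then have "ip (T e) (T e) = 0"
      using T_sym[of e "T e"] unfolding T_def[of "T e"] by simp
    then show ?thesis
      by (rule ip_self_eq_0D)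
  qed
  then have "T v = 0"
    by (rule selfadjoint_eq_0_if_basis[OF E T_sym])
  then show ?thesis
    unfolding T_def by simp
qed

text \<open>Uniqueness of positive square roots without spectral theory: for \<open>T = P - Q\<close> one has
  \<open>P T = - T Q\<close>, hence \<open>tr (T P T) = - tr (T T Q) = - tr (T Q T)\<close> by cyclicity of the trace,
  which is available because the diagonal of \<open>Q\<close> is summable.\<close>
lemma positive_sqrt_unique:
  assumes E: "onb ip E" and P: "positive_op smul ip P" and Q: "positive_op smul ip Q"
    and square: "\<And>v. P (P v) = Q (Q v)" and trace: "(\<lambda>e. Re (ip (Q e) e)) summable_on E"
  shows "P v = Q v"
proof -
  obtain C where C: "\<And>x. hnorm ip (Q x) \<le> C * hnorm ip x"
    using bounded_op_nonneg_bound[OF positive_op_bounded[OF Q]] by blast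
  define T where "T x = P x - Q x" for x
  have T_sym: "ip (T x) y = ip x (T y)" for x y
    unfolding T_def by (simp add: ip_diff_left ip_diff_right positive_op_selfadjoint[OF P]
        positive_op_selfadjoint[OF Q])
  have PT: "P (T x) = - T (Q x)" for x
    unfolding T_def by (simp add: bounded_op_diff[OF positive_op_bounded[OF P]] square)
  have "(hnorm ip (P x))\<^sup>2 = (hnorm ip (Q x))\<^sup>2" for x
    unfolding power2_hnorm
    by (metis square positive_op_selfadjoint[OF P] positive_op_selfadjoint[OF Q])
  then have T_le: "(hnorm ip (T x))\<^sup>2 \<le> 4 * (hnorm ip (Q x))\<^sup>2" for x
    using hnorm_diff_square_le[of "P x" "Q x"] unfolding T_def by simp
  have Q_hs: "(\<lambda>e. (hnorm ip (Q e))\<^sup>2) summable_on E"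
    using Q trace by (rule positive_op_hilbert_schmidt)
  have "(hnorm ip (T (Q e)))\<^sup>2 \<le> (4 * C\<^sup>2) * (hnorm ip (Q e))\<^sup>2" for e
    using T_le[of "Q e"] power_mono[OF C[of "Q e"] hnorm_nonneg, of 2]
    by (simp add: power_mult_distrib)
  then have TQ_hs: "(\<lambda>e. (hnorm ip (T (Q e)))\<^sup>2) summable_on E"
    by (intro summable_on_comparison_test[OF summable_on_cmult_right[where c = "4 * C\<^sup>2", OF Q_hs]]) auto
  have T_hs: "(\<lambda>e. (hnorm ip (T e))\<^sup>2) summable_on E"
    by (rule summable_on_comparison_test[OF summable_on_cmult_right[where c = 4, OF Q_hs]])
      (use T_le in auto)
  obtain S where S1: "((\<lambda>e. ip (T (Q e)) (T e)) has_sum S) E"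
    and S2: "((\<lambda>f. ip (T f) (Q (T f))) has_sum S) E"
    by (rule trace_product_swap[OF E TQ_hs T_hs, of "\<lambda>x. Q (T x)" T])
      (simp_all add: T_sym positive_op_selfadjoint[OF Q])
  have "((\<lambda>e. Re (ip (P (T e)) (T e)) + Re (ip (Q (T e)) (T e))) has_sum (- Re S + Re S)) E"
  proof (rule has_sum_add)
    show "((\<lambda>e. Re (ip (P (T e)) (T e))) has_sum - Re S) E"
      using has_sum_uminusI[OF has_sum_Re[OF S1]] by (simp add: PT)
    show "((\<lambda>e. Re (ip (Q (T e)) (T e))) has_sum Re S) E"
      using has_sum_Re[OF S2] by (simp add: positive_op_selfadjoint[OF Q])
  qed
  then show ?thesis
    unfolding T_def by (intro positive_ops_eq_if_diff_traces_vanish[OF E P Q]) simp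
qed

lemma abs_op_positive:
  assumes Q: "positive_op smul ip Q" and E: "onb ip E"
    and trace: "(\<lambda>e. Re (ip (Q e) e)) summable_on E"
  shows "abs_op smul ip Q = Q"
  unfolding abs_op_def adj_selfadjoint[OF positive_op_selfadjoint[OF Q]]
proof (rule the_equality)
  fix P
  assume "positive_op smul ip P \<and> P \<circ> P = Q \<circ> Q"
  then show "P = Q"
    using positive_sqrt_unique[OF E _ Q _ trace] by (metis comp_apply ext)
qed (use Q in simp)

lemma positive_op_trace_classI:
  assumes Q: "positive_op smul ip Q" and E: "onb ip E"
    and trace: "(\<lambda>e. Re (ip (Q e) e)) summable_on E"
  shows "trace_class smul ip Q"
  unfolding trace_class_def abs_op_positive[OF assms]
  using positive_op_bounded[OF Q] E trace by blast

section \<open>Convolution with a rank-one projection\<close>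

lemma span_proj_singleton [simp]: "span_proj {\<phi>} v = smul (ip v \<phi>) \<phi>"
  unfolding span_proj_def by simp

lemma ip_span_proj_singleton_self: "ip (span_proj {\<phi>} v) v = of_real ((cmod (ip v \<phi>))\<^sup>2)"
  using ip_conj_sym[of \<phi> v] by (simp add: complex_mult_cnj cmod_power2)

lemma positive_op_span_proj_singleton:
  assumes \<phi>: "ip \<phi> \<phi> = 1"
  shows "positive_op smul ip (span_proj {\<phi>})"
proof -
  have "hnorm ip (span_proj {\<phi>} x) \<le> 1 * hnorm ip x" for x
  proof (rule power2_le_imp_le)
    have "ip (span_proj {\<phi>} x) (span_proj {\<phi>} x) = ip x \<phi> * cnj (ip x \<phi>)"
      using \<phi> by simp
    then have "(hnorm ip (span_proj {\<phi>} x))\<^sup>2 = (cmod (ip x \<phi>))\<^sup>2"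
      unfolding power2_hnorm by (simp only: complex_mult_cnj Re_complex_of_real cmod_power2)
    also have "\<dots> \<le> (1 * hnorm ip x)\<^sup>2"
      using cauchy_schwarz_square[of x \<phi>] \<phi> by (simp add: power2_hnorm)
    finally show "(hnorm ip (span_proj {\<phi>} x))\<^sup>2 \<le> (1 * hnorm ip x)\<^sup>2" .
  qed (simp add: hnorm_nonneg)
  then have "bounded_op smul ip (span_proj {\<phi>})"
    unfolding bounded_op_def by (auto simp: ip_add_left smul_add_left intro!: exI[of _ 1])
  then show ?thesis
    unfolding positive_op_def ip_span_proj_singleton_self by simp
qed

lemma trace_class_span_proj_singleton:
  assumes E: "onb ip E" and \<phi>: "ip \<phi> \<phi> = 1"
  shows "trace_class smul ip (span_proj {\<phi>})"
proof (rule positive_op_trace_classI[OF positive_op_span_proj_singleton[OF \<phi>] E])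
  have "((\<lambda>e. (cmod (ip \<phi> e))\<^sup>2) has_sum Re (ip \<phi> \<phi>)) E"
    by (rule parseval_norm[OF E])
  moreover have "Re (ip (span_proj {\<phi>} e) e) = (cmod (ip \<phi> e))\<^sup>2" for e
    unfolding ip_span_proj_singleton_self by (metis Re_complex_of_real complex_mod_cnj ip_conj_sym)
  ultimately show "(\<lambda>e. Re (ip (span_proj {\<phi>} e) e)) summable_on E"
    unfolding summable_on_def by auto
qed

lemma op_conv_span_proj_singleton:
  assumes U: "unitary_op smul ip (U x)" and R: "\<And>a b. ip (R a) b = ip a (R b)"
    and A: "positive_op smul ip A"
  shows "op_conv ip U R A (span_proj {\<phi>}) x = ip (A (R (adj ip (U x) \<phi>))) (R (adj ip (U x) \<phi>))"
proof -
  define V where "V = adj ip (U x)"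
  define w where "w = R (V \<phi>)"
  define y where "y = U x (R (A w))"
  have U_adj: "ip (U x a) b = ip a (V b)" for a b
    unfolding V_def by (rule unitary_op_adj[OF U])
  have V_adj: "ip (V a) b = ip a (U x b)" for a b
    by (metis U_adj ip_conj_sym complex_cnj_cnj)
  define E where "E = (SOME E. onb ip E)"
  have E: "onb ip E"
    unfolding E_def by (rule someI_ex[OF onb_exists])
  have summand: "ip ((span_proj {\<phi>} \<circ> (U x \<circ> (R \<circ> A \<circ> R) \<circ> V)) e) e = ip \<phi> e * ip e y" for e
  proof -
    have "ip (U x (R (A (R (V e))))) \<phi> = ip (R (A (R (V e)))) (V \<phi>)"
      by (rule U_adj)
    also have "\<dots> = ip (R (V e)) (A w)"
      unfolding w_def by (simp add: R positive_op_selfadjoint[OF A])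
    also have "\<dots> = ip e y"
      unfolding y_def by (simp add: R V_adj)
    finally show ?thesis
      by (simp add: mult.commute)
  qed
  have "op_conv ip U R A (span_proj {\<phi>}) x = (\<Sum>\<^sub>\<infinity>e\<in>E. ip \<phi> e * ip e y)"
    unfolding op_conv_def trace_def Let_def E_def[symmetric] V_def[symmetric] summand ..
  also have "\<dots> = ip \<phi> y"
    by (rule infsumI[OF parseval[OF E]])
  also have "\<dots> = ip (A w) w"
    unfolding y_def using positive_op_Im[OF A, of w] ip_conj_sym[of \<phi>]
    by (simp add: U_adj R w_def complex_eq_iff)
  finally show ?thesis
    unfolding w_def V_def .
qed

lemma positive_op_residual_expansion:
  assumes A: "positive_op smul ip A"
  shows "ip (A (w - span_proj F w)) (w - span_proj F w) = ip (A w) w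
    - (\<Sum>e\<in>F. ip e w * ip w (A e)) - (\<Sum>e\<in>F. ip (A e) w * ip w e)
    + (\<Sum>e\<in>F. \<Sum>e'\<in>F. ip (A e) e' * (ip e' w * ip w e))"
proof -
  have B: "bounded_op smul ip A"
    using A by (rule positive_op_bounded)
  have Ap: "A (span_proj F w) = (\<Sum>e\<in>F. smul (ip w e) (A e))"
    unfolding span_proj_def by (simp add: bounded_op_sum[OF B] bounded_op_smul[OF B])
  have cnj_ip: "cnj (ip w e) = ip e w" for e
    by (metis ip_conj_sym)
  have "ip (A w) (span_proj F w) = (\<Sum>e\<in>F. ip e w * ip w (A e))"
    unfolding span_proj_def ip_sum_right by (simp add: cnj_ip positive_op_selfadjoint[OF A])
  moreover have "ip (A (span_proj F w)) w = (\<Sum>e\<in>F. ip (A e) w * ip w e)"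
    unfolding Ap ip_sum_left by (simp add: mult.commute)
  moreover have "ip (A (span_proj F w)) (span_proj F w) = (\<Sum>e\<in>F. \<Sum>e'\<in>F. ip (A e) e' * (ip e' w * ip w e))"
  proof -
    have "ip (A e) (span_proj F w) = (\<Sum>e'\<in>F. ip e' w * ip (A e) e')" for e
      unfolding span_proj_def ip_sum_right by (simp add: cnj_ip)
    then have "ip (A (span_proj F w)) (span_proj F w) = (\<Sum>e\<in>F. ip w e * (\<Sum>e'\<in>F. ip e' w * ip (A e) e'))"
      unfolding Ap ip_sum_left by simp
    then show ?thesis
      by (simp add: sum_distrib_left mult.commute mult.left_commute)
  qed
  ultimately show ?thesis
    by (simp add: bounded_op_diff[OF B] ip_diff_left ip_diff_right)
qed

lemma diagonal_sum_le_integral: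
  fixes w :: "'x \<Rightarrow> 'h" and M :: "'x measure"
  assumes E: "orthonormal E" and F: "F \<subseteq> E" "finite F" and A: "positive_op smul ip A"
    and int: "\<And>u v. integrable M (\<lambda>x. ip u (w x) * ip (w x) v)"
    and resolution: "\<And>u v. (\<integral>x. ip u (w x) * ip (w x) v \<partial>M) = ip u v"
    and int_A: "integrable M (\<lambda>x. ip (A (w x)) (w x))"
  shows "(\<Sum>e\<in>F. Re (ip (A e) e)) \<le> Re (\<integral>x. ip (A (w x)) (w x) \<partial>M)"
proof -
  define g where "g x = ip (A (w x - span_proj F (w x))) (w x - span_proj F (w x))" for x
  have double: "(\<Sum>e\<in>F. \<Sum>e'\<in>F. ip (A e) e' * ip e' e) = (\<Sum>e\<in>F. ip (A e) e)"
    using orthonormal_sum_coeff[OF E F] F by (intro sum.cong) auto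
  have "integrable M g"
    unfolding g_def positive_op_residual_expansion[OF A] using int int_A by auto
  moreover have "integral\<^sup>L M g = (\<integral>x. ip (A (w x)) (w x) \<partial>M) - (\<Sum>e\<in>F. ip e (A e))"
    unfolding g_def positive_op_residual_expansion[OF A] using int int_A
    by (simp add: resolution double)
  moreover have "0 \<le> (\<integral>x. Re (g x) \<partial>M)"
    unfolding g_def by (intro Bochner_Integration.integral_nonneg positive_op_Re_nonneg[OF A])
  ultimately have "0 \<le> Re (\<integral>x. ip (A (w x)) (w x) \<partial>M) - (\<Sum>e\<in>F. Re (ip e (A e)))"
    by simp
  moreover have "Re (ip e (A e)) = Re (ip (A e) e)" for e
    by (subst ip_conj_sym) simp
  ultimately show ?thesis
    by simp
qed

lemma positive_op_diagonal_summable: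
  fixes w :: "'x \<Rightarrow> 'h" and M :: "'x measure"
  assumes E: "onb ip E" and A: "positive_op smul ip A"
    and int: "\<And>u v. integrable M (\<lambda>x. ip u (w x) * ip (w x) v)"
    and resolution: "\<And>u v. (\<integral>x. ip u (w x) * ip (w x) v \<partial>M) = ip u v"
    and int_A: "integrable M (\<lambda>x. ip (A (w x)) (w x))"
  shows "(\<lambda>e. Re (ip (A e) e)) summable_on E"
proof (rule nonneg_bdd_above_summable_on)
  show "bdd_above (sum (\<lambda>e. Re (ip (A e) e)) ` {F. F \<subseteq> E \<and> finite F})"
    using diagonal_sum_le_integral[OF onb_orthonormal[OF E] _ _ A int resolution int_A]
    by (intro bdd_aboveI[where M = "Re (\<integral>x. ip (A (w x)) (w x) \<partial>M)"]) auto
qed (rule positive_op_Re_nonneg[OF A])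

lemma coherent_states_resolution:
  assumes U: "\<And>x. unitary_op smul ip (U x)"
    and R_sym: "\<And>a b. ip (R a) b = ip a (R b)" and R_iso: "\<And>a b. ip (R a) (R b) = ip a b"
    and orth: "\<And>a b c d. integrable M (\<lambda>x. ip (U x a) b * cnj (ip (U x c) d)) \<and>
        (\<integral>x. ip (U x a) b * cnj (ip (U x c) d) \<partial>M) = ip a c * cnj (ip b d)"
    and \<phi>: "ip \<phi> \<phi> = 1"
  defines "w x \<equiv> R (adj ip (U x) \<phi>)"
  shows "integrable M (\<lambda>x. ip u (w x) * ip (w x) v)"
    and "(\<integral>x. ip u (w x) * ip (w x) v \<partial>M) = ip u v"
proof -
  have "ip u (w x) = ip (U x (R u)) \<phi>" for u x
    using R_sym[of u "adj ip (U x) \<phi>"] unitary_op_adj[OF U, of x "R u" \<phi>] unfolding w_def by simp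
  moreover have "ip (w x) v = cnj (ip v (w x))" for v x
    by (rule ip_conj_sym)
  ultimately have integrand: "ip u (w x) * ip (w x) v = ip (U x (R u)) \<phi> * cnj (ip (U x (R v)) \<phi>)" for x
    by simp
  show "integrable M (\<lambda>x. ip u (w x) * ip (w x) v)"
    unfolding integrand using orth by blast
  show "(\<integral>x. ip u (w x) * ip (w x) v \<partial>M) = ip u v"
    unfolding integrand using orth \<phi> R_iso by simp
qed

end

lemma heis_settingD:
  assumes "heis_setting smul ip m U R M"
  shows "hilbert_space smul ip" and "\<forall>x. unitary_op smul ip (U x)"
    and "\<forall>a b c d. integrable M (\<lambda>x. ip (U x a) b * cnj (ip (U x c) d)) \<and>
        (\<integral>x. ip (U x a) b * cnj (ip (U x c) d) \<partial>M) = ip a c * cnj (ip b d)"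
    and "unitary_op smul ip R" and "selfadjoint_op smul ip R"
  using assms unfolding heis_setting_def by simp_all

theorem lemma5p4:
  fixes smul :: "complex \<Rightarrow> 'h::ab_group_add \<Rightarrow> 'h"
    and ip :: "'h \<Rightarrow> 'h \<Rightarrow> complex"
    and m :: "'x::{topological_ab_group_add,t2_space} \<Rightarrow> 'x \<Rightarrow> complex"
    and U :: "'x \<Rightarrow> 'h \<Rightarrow> 'h" and R :: "'h \<Rightarrow> 'h" and M :: "'x measure"
    and A :: "'h \<Rightarrow> 'h"
  assumes "heis_setting smul ip m U R M"
    and "positive_op smul ip A"
    and "\<And>B. trace_class smul ip B \<Longrightarrow> positive_op smul ip B \<Longrightarrow> integrable M (op_conv ip U R A B)"
  shows "trace_class smul ip A"
proof -
  note setting = heis_settingD[OF assms(1)]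
  interpret hilbert smul ip
    by (rule hilbert.intro) (rule setting(1))
  have U: "\<And>x. unitary_op smul ip (U x)" and R_sym: "\<And>a b. ip (R a) b = ip a (R b)"
    and R_iso: "\<And>a b. ip (R a) (R b) = ip a b"
    using setting(2,4,5) unfolding unitary_op_def selfadjoint_op_def by auto
  obtain E where E: "onb ip E"
    using onb_exists ..
  have "(\<lambda>e. Re (ip (A e) e)) summable_on E"
  proof (cases "E = {}")
    case False
    then obtain \<phi> where "\<phi> \<in> E"
      by blast
    then have \<phi>: "ip \<phi> \<phi> = 1"
      using orthonormal_ip_self[OF onb_orthonormal[OF E]] by blast
    have "integrable M (op_conv ip U R A (span_proj {\<phi>}))"
      using assms(3) trace_class_span_proj_singleton[OF E \<phi>] positive_op_span_proj_singleton[OF \<phi>] .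
    moreover have "op_conv ip U R A (span_proj {\<phi>}) = (\<lambda>x. ip (A (R (adj ip (U x) \<phi>))) (R (adj ip (U x) \<phi>)))"
      by (rule ext, rule op_conv_span_proj_singleton[OF U R_sym assms(2)])
    ultimately have "integrable M (\<lambda>x. ip (A (R (adj ip (U x) \<phi>))) (R (adj ip (U x) \<phi>)))"
      by (simp only:)
    then show ?thesis
      using coherent_states_resolution[OF U R_sym R_iso setting(3)[rule_format] \<phi>]
      by (intro positive_op_diagonal_summable[OF E assms(2)])
  qed simp
  then show ?thesis
    by (rule positive_op_trace_classI[OF assms(2) E])
qed

end
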